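(* Let $\lambda_0$ be a real number, let $\lambda_1=\lambda_0$, let $\lambda_2,\dots,\lambda_n\in\mathbb{C}$, and suppose that $E_{(\lambda_2,\dots,\lambda_n)}$ is an extended Chebyshev space over $[a,b]$ ($a<b$) that is closed under complex conjugation. Let $p_{n,0},\dots,p_{n,n}$ be a Bernstein basis of $E_{(\lambda_0,\lambda_0,\lambda_2,\dots,\lambda_n)}$ for $\{a,b\}$ consisting of real-valued functions non-negative on $[a,b]$. Then there exist unique points $t_0,\dots,t_n\in[a,b]$ and unique positive coefficients $\alpha_0,\dots,\alpha_n$ such that the operator $B_n:C[a,b]\to E_{(\lambda_0,\lambda_0,\lambda_2,\dots,\lambda_n)}$, $B_nf=\sum_{k=0}^nf(t_k)\alpha_kp_{n,k}$, satisfies $B_n(e^{\lambda_0x})=e^{\lambda_0x}$ and $B_n(xe^{\lambda_0x})=xe^{\lambda_0x}$.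
   Context: For complex numbers $\mu_0,\dots,\mu_m$ (repetitions allowed), $E_{(\mu_0,\dots,\mu_m)}=\{f\in C^\infty(\mathbb{R},\mathbb{C}):(\frac{d}{dx}-\mu_0)\cdots(\frac{d}{dx}-\mu_m)f=0\}$ (dimension $m+1$), considered on $[a,b]$; it is closed under complex conjugation if $\bar f$ belongs to it whenever $f$ does. An $(m+1)$-dimensional space $V\subset C^m([a,b],\mathbb{C})$ is an extended Chebyshev space over $[a,b]$ if every non-zero $f\in V$ has at most $m$ zeros in $[a,b]$ counting multiplicities. A function has a zero of order $k$ at $c$ if $f(c)=\dots=f^{(k-1)}(c)=0\ne f^{(k)}(c)$ (one-sided at endpoints); a Bernstein basis for $\{a,b\}$ of an $(m+1)$-dimensional space is a system $p_{m,0},\dots,p_{m,m}$ in it with $p_{m,k}$ having a zero of order exactly $k$ at $a$ and exactly $m-k$ at $b$. *)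

theory Defs
  imports "HOL-Analysis.Analysis"
begin

definition Dv :: "(real \<Rightarrow> complex) \<Rightarrow> (real \<Rightarrow> complex)" where
  "Dv g = (\<lambda>x. vector_derivative g (at x))"

definition smooth_fun :: "(real \<Rightarrow> complex) \<Rightarrow> bool" where
  "smooth_fun f \<longleftrightarrow> (\<forall>k x. ((Dv ^^ k) f) differentiable (at x))"

fun Lop :: "complex list \<Rightarrow> (real \<Rightarrow> complex) \<Rightarrow> (real \<Rightarrow> complex)" where
  "Lop [] f = f"
| "Lop (\<mu> # \<mu>s) f = (\<lambda>x. Dv (Lop \<mu>s f) x - \<mu> * Lop \<mu>s f x)"

definition Espace :: "complex list \<Rightarrow> (real \<Rightarrow> complex) set" where
  "Espace \<mu>s = {f. smooth_fun f \<and> (\<forall>x. Lop \<mu>s f x = 0)}"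

definition closed_under_cnj :: "(real \<Rightarrow> complex) set \<Rightarrow> bool" where
  "closed_under_cnj V \<longleftrightarrow> (\<forall>f\<in>V. (\<lambda>x. cnj (f x)) \<in> V)"

definition zero_of_order_ge :: "(real \<Rightarrow> complex) \<Rightarrow> real \<Rightarrow> nat \<Rightarrow> bool" where
  "zero_of_order_ge f c k \<longleftrightarrow> (\<forall>j<k. (Dv ^^ j) f c = 0)"

definition zero_of_order :: "(real \<Rightarrow> complex) \<Rightarrow> real \<Rightarrow> nat \<Rightarrow> bool" where
  "zero_of_order f c k \<longleftrightarrow> zero_of_order_ge f c k \<and> (Dv ^^ k) f c \<noteq> 0"

text \<open>Extended Chebyshev space over [a,b] (with dim V = m+1): every f in V that is
  non-zero on [a,b] has at most m zeros in [a,b] counting multiplicities.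
  m is an integer so that the degenerate case m = -1 is allowed.\<close>
definition ext_chebyshev :: "(real \<Rightarrow> complex) set \<Rightarrow> int \<Rightarrow> real \<Rightarrow> real \<Rightarrow> bool" where
  "ext_chebyshev V m a b \<longleftrightarrow>
     (\<forall>f\<in>V. (\<exists>x\<in>{a..b}. f x \<noteq> 0) \<longrightarrow>
        (\<forall>S mult. finite S \<and> S \<subseteq> {a..b} \<and> (\<forall>c\<in>S. zero_of_order_ge f c (mult c))
            \<longrightarrow> int (\<Sum>c\<in>S. mult c) \<le> m))"

definition bernstein_basis :: "(real \<Rightarrow> complex) set \<Rightarrow> nat \<Rightarrow> real \<Rightarrow> real \<Rightarrow> (nat \<Rightarrow> real \<Rightarrow> complex) \<Rightarrow> bool" where
  "bernstein_basis V m a b p \<longleftrightarrow>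
     (\<forall>k\<le>m. p k \<in> V \<and> zero_of_order (p k) a k \<and> zero_of_order (p k) b (m - k))"

end

theory Submission
  imports Defs
begin

text \<open>Write \<open>e(x) = exp (\<lambda>\<^sub>0 x)\<close>, \<open>D\<close> for the derivative, and expand
  \<open>e = \<Sum> c\<^sub>k p\<^sub>k\<close> and \<open>(x - a) e = \<Sum> d\<^sub>k p\<^sub>k\<close>. The functions
  \<open>H\<^sub>k = (D - \<lambda>\<^sub>0) (c\<^sub>k p\<^sub>k + ... + c\<^sub>n p\<^sub>n)\<close> satisfy \<open>(D - \<lambda>\<^sub>0) H\<^sub>k \<in> E(\<lambda>\<^sub>2, ..., \<lambda>\<^sub>n)\<close>,
  so Rolle's theorem for \<open>D - \<lambda>\<^sub>0\<close> (i.e. for \<open>exp (- \<lambda>\<^sub>0 x) f\<close>) together with the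
  Chebyshev property bounds their zeros: \<open>H\<^sub>k\<close> is positive on \<open>(a, b)\<close> and vanishes to
  order exactly \<open>k - 1\<close> at \<open>a\<close>. Comparing lowest non-vanishing derivatives at \<open>a\<close> gives
  \<open>c\<^sub>k > 0\<close>. Applying \<open>D - \<lambda>\<^sub>0\<close> to the second expansion and summing by parts gives
  \<open>e = \<Sum> (\<tau>\<^sub>k\<^sub>+\<^sub>1 - \<tau>\<^sub>k) H\<^sub>k\<^sub>+\<^sub>1\<close> with \<open>\<tau>\<^sub>k = d\<^sub>k / c\<^sub>k\<close>, an expansion of the same kind in one
  dimension less; so \<open>\<tau>\<close> increases strictly from \<open>\<tau>\<^sub>0 = 0\<close> to \<open>\<tau>\<^sub>n = b - a\<close>. The nodes are
  \<open>t\<^sub>k = a + \<tau>\<^sub>k\<close> and the weights \<open>\<alpha>\<^sub>k = c\<^sub>k exp (- \<lambda>\<^sub>0 t\<^sub>k)\<close>; uniqueness is the linear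
  independence of the basis.\<close>

lemma Dv_eqI: "(f has_vector_derivative f') (at x) \<Longrightarrow> Dv f x = f'"
  by (simp add: Dv_def vector_derivative_at)

lemma has_vector_derivative_Dv: "f differentiable (at x) \<Longrightarrow> (f has_vector_derivative Dv f x) (at x)"
  unfolding Dv_def using vector_derivative_works by blast

lemma smooth_fun_differentiable_iter: "smooth_fun f \<Longrightarrow> (Dv ^^ k) f differentiable (at x)"
  unfolding smooth_fun_def by blast

lemma smooth_fun_differentiable: "smooth_fun f \<Longrightarrow> f differentiable (at x)"
  using smooth_fun_differentiable_iter[of f 0] by simp

lemma Dv_iter_Suc: "(Dv ^^ Suc k) f = (Dv ^^ k) (Dv f)"
  by (simp add: funpow_Suc_right del: funpow.simps)

lemma smooth_fun_Dv: "smooth_fun f \<Longrightarrow> smooth_fun (Dv f)"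
  unfolding smooth_fun_def by (metis Dv_iter_Suc)

lemma Dv_lincomb_at:
  "f differentiable (at x) \<Longrightarrow> g differentiable (at x) \<Longrightarrow>
   Dv (\<lambda>x. c * f x + g x) x = c * Dv f x + Dv g x"
  by (intro Dv_eqI derivative_intros has_vector_derivative_Dv)

lemma Dv_iter_lincomb:
  "smooth_fun f \<Longrightarrow> smooth_fun g \<Longrightarrow>
   (Dv ^^ k) (\<lambda>x. c * f x + g x) = (\<lambda>x. c * (Dv ^^ k) f x + (Dv ^^ k) g x)"
  by (induction k) (auto intro!: ext Dv_lincomb_at smooth_fun_differentiable_iter)

lemma smooth_fun_lincomb: "smooth_fun f \<Longrightarrow> smooth_fun g \<Longrightarrow> smooth_fun (\<lambda>x. c * f x + g x)"
  unfolding smooth_fun_def[of "\<lambda>x. c * f x + g x"] Dv_iter_lincomb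
  by (auto intro!: differentiableI_vector derivative_intros has_vector_derivative_Dv
      simp: smooth_fun_differentiable_iter)

lemma Dv_iter_zero: "(Dv ^^ k) (\<lambda>x. 0) = (\<lambda>x. 0)"
  by (induction k) (auto intro!: ext Dv_eqI derivative_intros)

lemma smooth_fun_zero: "smooth_fun (\<lambda>x. 0)"
  unfolding smooth_fun_def Dv_iter_zero by simp

lemma smooth_fun_uminus: "smooth_fun f \<Longrightarrow> smooth_fun (\<lambda>x. - f x)"
  using smooth_fun_lincomb[OF _ smooth_fun_zero, of f "-1"] by simp

lemma smooth_fun_sum_Dv_iter:
  assumes "finite K" "\<And>k. k \<in> K \<Longrightarrow> smooth_fun (g k)"
  shows "smooth_fun (\<lambda>x. \<Sum>k\<in>K. c k * g k x) \<and>
     (\<forall>j. (Dv ^^ j) (\<lambda>x. \<Sum>k\<in>K. c k * g k x) = (\<lambda>x. \<Sum>k\<in>K. c k * (Dv ^^ j) (g k) x))"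
  using assms
proof (induction K rule: finite_induct)
  case empty
  then show ?case by (simp add: smooth_fun_zero Dv_iter_zero)
next
  case (insert k K)
  then show ?case
    by (simp add: smooth_fun_lincomb Dv_iter_lincomb)
qed

lemma smooth_fun_sum:
  "finite K \<Longrightarrow> (\<And>k. k \<in> K \<Longrightarrow> smooth_fun (g k)) \<Longrightarrow> smooth_fun (\<lambda>x. \<Sum>k\<in>K. c k * g k x)"
  using smooth_fun_sum_Dv_iter by blast

lemma Dv_iter_sum:
  "finite K \<Longrightarrow> (\<And>k. k \<in> K \<Longrightarrow> smooth_fun (g k)) \<Longrightarrow>
   (Dv ^^ j) (\<lambda>x. \<Sum>k\<in>K. c k * g k x) = (\<lambda>x. \<Sum>k\<in>K. c k * (Dv ^^ j) (g k) x)"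
  using smooth_fun_sum_Dv_iter by blast

subsection \<open>The operators \<open>D - \<mu>\<close>\<close>

definition Dminus :: "complex \<Rightarrow> (real \<Rightarrow> complex) \<Rightarrow> real \<Rightarrow> complex" where
  "Dminus \<mu> f = (\<lambda>x. Dv f x - \<mu> * f x)"

lemma Lop_Cons_Dminus: "Lop (\<mu> # \<mu>s) f = Dminus \<mu> (Lop \<mu>s f)"
  by (simp add: Dminus_def)

declare Lop.simps(2)[simp del]

lemma Dminus_iter_Suc: "(Dminus \<mu> ^^ Suc k) f = (Dminus \<mu> ^^ k) (Dminus \<mu> f)"
  by (simp add: funpow_Suc_right del: funpow.simps)

lemma smooth_fun_Dminus: "smooth_fun f \<Longrightarrow> smooth_fun (Dminus \<mu> f)"
proof -
  assume "smooth_fun f"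
  then have "smooth_fun (\<lambda>x. (- \<mu>) * f x + Dv f x)"
    by (intro smooth_fun_lincomb smooth_fun_Dv)
  then show ?thesis
    by (simp add: Dminus_def)
qed

lemma smooth_fun_Dminus_iter: "smooth_fun f \<Longrightarrow> smooth_fun ((Dminus \<mu> ^^ k) f)"
  by (induction k) (auto simp: smooth_fun_Dminus)

lemma Dminus_lincomb:
  "smooth_fun f \<Longrightarrow> smooth_fun g \<Longrightarrow>
   Dminus \<mu> (\<lambda>x. c * f x + g x) = (\<lambda>x. c * Dminus \<mu> f x + Dminus \<mu> g x)"
  using Dv_iter_lincomb[of f g 1 c] by (auto simp: Dminus_def algebra_simps)

lemma Dminus_uminus: "smooth_fun f \<Longrightarrow> Dminus \<mu> (\<lambda>x. - f x) = (\<lambda>x. - Dminus \<mu> f x)"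
  using Dminus_lincomb[OF _ smooth_fun_zero, of f \<mu> "-1"]
  by (simp add: Dminus_def Dv_iter_zero[of 1, simplified])

lemma Dminus_iter_uminus:
  "smooth_fun f \<Longrightarrow> (Dminus \<mu> ^^ k) (\<lambda>x. - f x) = (\<lambda>x. - (Dminus \<mu> ^^ k) f x)"
  by (induction k) (auto simp: Dminus_uminus smooth_fun_Dminus_iter)

lemma Dminus_sum:
  "finite K \<Longrightarrow> (\<And>k. k \<in> K \<Longrightarrow> smooth_fun (g k)) \<Longrightarrow>
   Dminus \<mu> (\<lambda>x. \<Sum>k\<in>K. c k * g k x) = (\<lambda>x. \<Sum>k\<in>K. c k * Dminus \<mu> (g k) x)"
  using Dv_iter_sum[of K g 1 c]
  by (auto simp: Dminus_def sum_subtractf sum_distrib_left algebra_simps)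

lemma Dminus_iter_sum:
  "finite K \<Longrightarrow> (\<And>k. k \<in> K \<Longrightarrow> smooth_fun (g k)) \<Longrightarrow>
   (Dminus \<mu> ^^ i) (\<lambda>x. \<Sum>k\<in>K. c k * g k x) = (\<lambda>x. \<Sum>k\<in>K. c k * (Dminus \<mu> ^^ i) (g k) x)"
  by (induction i) (simp_all add: Dminus_sum smooth_fun_Dminus_iter)

lemma Dminus_commute: "smooth_fun f \<Longrightarrow> Dminus \<mu> (Dminus \<nu> f) = Dminus \<nu> (Dminus \<mu> f)"
proof -
  assume f: "smooth_fun f"
  have swap: "Dminus \<mu> (Dminus \<nu> f) = (\<lambda>x. (- \<nu>) * Dminus \<mu> f x + Dminus \<mu> (Dv f) x)" for \<mu> \<nu>
  proof -
    have "Dminus \<nu> f = (\<lambda>x. (- \<nu>) * f x + Dv f x)"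
      by (auto simp: Dminus_def)
    then show ?thesis
      using Dminus_lincomb[OF f smooth_fun_Dv[OF f]] by (simp only:)
  qed
  show ?thesis
    unfolding swap[of \<mu> \<nu>] swap[of \<nu> \<mu>] by (auto simp: Dminus_def algebra_simps)
qed

lemma smooth_fun_Lop: "smooth_fun f \<Longrightarrow> smooth_fun (Lop \<mu>s f)"
  by (induction \<mu>s) (auto simp: Lop_Cons_Dminus smooth_fun_Dminus)

lemma Lop_Dminus: "smooth_fun f \<Longrightarrow> Lop \<mu>s (Dminus \<nu> f) = Dminus \<nu> (Lop \<mu>s f)"
  by (induction \<mu>s) (auto simp: Lop_Cons_Dminus Dminus_commute smooth_fun_Lop)

lemma Lop_lincomb:
  "smooth_fun f \<Longrightarrow> smooth_fun g \<Longrightarrow>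
   Lop \<mu>s (\<lambda>x. c * f x + g x) = (\<lambda>x. c * Lop \<mu>s f x + Lop \<mu>s g x)"
  by (induction \<mu>s) (auto simp: Lop_Cons_Dminus Dminus_lincomb smooth_fun_Lop)

lemma Lop_sum:
  "finite K \<Longrightarrow> (\<And>k. k \<in> K \<Longrightarrow> smooth_fun (g k)) \<Longrightarrow>
   Lop \<mu>s (\<lambda>x. \<Sum>k\<in>K. c k * g k x) = (\<lambda>x. \<Sum>k\<in>K. c k * Lop \<mu>s (g k) x)"
  by (induction \<mu>s) (auto simp: Lop_Cons_Dminus Dminus_sum smooth_fun_Lop)

lemma Espace_smooth: "f \<in> Espace \<mu>s \<Longrightarrow> smooth_fun f"
  by (simp add: Espace_def)

lemma Espace_lincomb: "f \<in> Espace \<mu>s \<Longrightarrow> g \<in> Espace \<mu>s \<Longrightarrow> (\<lambda>x. c * f x + g x) \<in> Espace \<mu>s"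
  unfolding Espace_def by (auto simp: Lop_lincomb smooth_fun_lincomb)

lemma Espace_sum:
  "finite K \<Longrightarrow> (\<And>k. k \<in> K \<Longrightarrow> g k \<in> Espace \<mu>s) \<Longrightarrow> (\<lambda>x. \<Sum>k\<in>K. c k * g k x) \<in> Espace \<mu>s"
  unfolding Espace_def by (auto simp: Lop_sum smooth_fun_sum)

lemma Dminus_Dminus_in_Espace: "f \<in> Espace (\<mu> # \<mu> # \<mu>s) \<Longrightarrow> Dminus \<mu> (Dminus \<mu> f) \<in> Espace \<mu>s"
  by (simp add: Espace_def Lop_Cons_Dminus Lop_Dminus smooth_fun_Dminus)

text \<open>Zero orders measured with \<open>D - \<mu>\<close>, which the weighted Rolle theorem controls; for
  smooth functions they agree with those measured with \<open>D\<close>.\<close>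

definition Dminus_zero_ge :: "complex \<Rightarrow> (real \<Rightarrow> complex) \<Rightarrow> real \<Rightarrow> nat \<Rightarrow> bool" where
  "Dminus_zero_ge \<mu> f c k \<longleftrightarrow> (\<forall>j<k. (Dminus \<mu> ^^ j) f c = 0)"

lemma Dminus_zero_ge_Suc:
  "Dminus_zero_ge \<mu> f c (Suc k) \<longleftrightarrow> Dminus_zero_ge \<mu> f c k \<and> (Dminus \<mu> ^^ k) f c = 0"
  unfolding Dminus_zero_ge_def by (auto simp: less_Suc_eq)

lemma Dminus_zero_ge_Suc_Dminus:
  "Dminus_zero_ge \<mu> f c (Suc k) \<longleftrightarrow> f c = 0 \<and> Dminus_zero_ge \<mu> (Dminus \<mu> f) c k"
  unfolding Dminus_zero_ge_def All_less_Suc2 by (simp add: Dminus_iter_Suc del: funpow.simps)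

lemma Dminus_zero_ge_mono: "Dminus_zero_ge \<mu> f c k \<Longrightarrow> j \<le> k \<Longrightarrow> Dminus_zero_ge \<mu> f c j"
  unfolding Dminus_zero_ge_def by auto

lemma Dminus_zero_ge_Dminus: "Dminus_zero_ge \<mu> f c k \<Longrightarrow> Dminus_zero_ge \<mu> (Dminus \<mu> f) c (k - 1)"
  by (cases k) (simp add: Dminus_zero_ge_def, simp add: Dminus_zero_ge_Suc_Dminus)

lemma Dminus_zero_ge_uminus:
  "smooth_fun f \<Longrightarrow> Dminus_zero_ge \<mu> (\<lambda>x. - f x) c k \<longleftrightarrow> Dminus_zero_ge \<mu> f c k"
  unfolding Dminus_zero_ge_def by (simp add: Dminus_iter_uminus)

lemma Dminus_zero_ge_sum:
  "finite K \<Longrightarrow> (\<And>k. k \<in> K \<Longrightarrow> smooth_fun (g k) \<and> Dminus_zero_ge \<mu> (g k) c m) \<Longrightarrow>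
   Dminus_zero_ge \<mu> (\<lambda>x. \<Sum>k\<in>K. w k * g k x) c m"
  unfolding Dminus_zero_ge_def by (subst Dminus_iter_sum) auto

lemma Dv_iter_Dminus:
  "smooth_fun f \<Longrightarrow> (Dv ^^ j) (Dminus \<mu> f) = (\<lambda>x. (Dv ^^ Suc j) f x - \<mu> * (Dv ^^ j) f x)"
proof -
  assume f: "smooth_fun f"
  have eq: "Dminus \<mu> f = (\<lambda>x. (- \<mu>) * f x + Dv f x)"
    by (auto simp: Dminus_def)
  show ?thesis
    unfolding eq Dv_iter_Suc Dv_iter_lincomb[OF f smooth_fun_Dv[OF f]] by simp
qed

lemma zero_of_order_ge_Dminus:
  "smooth_fun f \<Longrightarrow> zero_of_order_ge f c (Suc k) \<Longrightarrow> zero_of_order_ge (Dminus \<mu> f) c k"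
  unfolding zero_of_order_ge_def by (auto simp: Dv_iter_Dminus simp del: funpow.simps)

lemma zero_of_order_ge_Suc_iff_Dminus:
  assumes f: "smooth_fun f"
  shows "zero_of_order_ge f c (Suc k) \<longleftrightarrow> f c = 0 \<and> zero_of_order_ge (Dminus \<mu> f) c k"
proof (intro iffI conjI)
  assume "f c = 0 \<and> zero_of_order_ge (Dminus \<mu> f) c k"
  then have f0: "f c = 0" and z: "\<And>j. j < k \<Longrightarrow> (Dv ^^ j) (Dminus \<mu> f) c = 0"
    by (auto simp: zero_of_order_ge_def)
  have "(Dv ^^ j) f c = 0" if "j < Suc k" for j
    using that
  proof (induction j)
    case (Suc j)
    then show ?case
      using z[of j] f by (simp add: Dv_iter_Dminus del: funpow.simps)
  qed (use f0 in simp)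
  then show "zero_of_order_ge f c (Suc k)"
    by (simp add: zero_of_order_ge_def)
next
  assume "zero_of_order_ge f c (Suc k)"
  then show "f c = 0" and "zero_of_order_ge (Dminus \<mu> f) c k"
    using zero_of_order_ge_Dminus[OF f] by (auto simp: zero_of_order_ge_def)
qed

lemma zero_of_order_ge_iff_Dminus:
  "smooth_fun f \<Longrightarrow> zero_of_order_ge f c k \<longleftrightarrow> Dminus_zero_ge \<mu> f c k"
proof (induction k arbitrary: f)
  case 0
  then show ?case
    by (simp add: zero_of_order_ge_def Dminus_zero_ge_def)
next
  case (Suc k)
  then show ?case
    by (simp add: zero_of_order_ge_Suc_iff_Dminus[of f _ _ \<mu>] Dminus_zero_ge_Suc_Dminus smooth_fun_Dminus)
qed

lemma Dminus_iter_at_zero: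
  "smooth_fun f \<Longrightarrow> zero_of_order_ge f c k \<Longrightarrow> (Dminus \<mu> ^^ k) f c = (Dv ^^ k) f c"
proof (induction k arbitrary: f)
  case 0
  then show ?case by simp
next
  case (Suc k)
  have "(Dminus \<mu> ^^ Suc k) f c = (Dminus \<mu> ^^ k) (Dminus \<mu> f) c"
    by (rule Dminus_iter_Suc[THEN fun_cong])
  also have "\<dots> = (Dv ^^ k) (Dminus \<mu> f) c"
    using Suc.IH[OF smooth_fun_Dminus zero_of_order_ge_Dminus] Suc.prems by blast
  also have "\<dots> = (Dv ^^ Suc k) f c"
    using Suc.prems by (simp add: Dv_iter_Dminus zero_of_order_ge_def del: funpow.simps)
  finally show ?case .
qed

lemma zero_of_order_Dminus:
  "smooth_fun f \<Longrightarrow> zero_of_order f c k \<longleftrightarrow> Dminus_zero_ge \<mu> f c k \<and> (Dminus \<mu> ^^ k) f c \<noteq> 0"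
  by (metis zero_of_order_def zero_of_order_ge_iff_Dminus Dminus_iter_at_zero)

subsection \<open>Expansion in a basis with prescribed zeros at one point\<close>

lemma Dminus_eq_0_imp_eq_0:
  assumes g: "smooth_fun g" and "\<And>x. Dminus \<mu> g x = 0" and "g c = 0"
  shows "g x = 0"
proof -
  define h where "h = (\<lambda>x. exp (- \<mu> * complex_of_real x) * g x)"
  have "(h has_vector_derivative 0) (at t)" for t
  proof -
    have d: "((\<lambda>z. exp (- \<mu> * z)) has_field_derivative (exp (- \<mu> * t) * (- \<mu>))) (at (of_real t))"
      by (auto intro!: derivative_eq_intros)
    have "((\<lambda>x. exp (- \<mu> * complex_of_real x)) has_vector_derivative (exp (- \<mu> * t) * (- \<mu>))) (at t)"
      using has_vector_derivative_real_field[OF d] by simp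
    then have "(h has_vector_derivative (exp (- \<mu> * t) * Dv g t + (exp (- \<mu> * t) * (- \<mu>)) * g t)) (at t)"
      unfolding h_def
      by (rule has_vector_derivative_mult[OF _ has_vector_derivative_Dv[OF smooth_fun_differentiable[OF g]]])
    moreover have "exp (- \<mu> * t) * Dv g t + (exp (- \<mu> * t) * (- \<mu>)) * g t = 0"
      using assms(2)[of t] by (simp add: Dminus_def algebra_simps)
    ultimately show ?thesis by simp
  qed
  then have "\<exists>h0. \<forall>x\<in>UNIV. h x = h0"
    by (intro has_derivative_zero_constant) (auto simp: has_vector_derivative_def)
  then obtain h0 where "\<And>x. h x = h0"
    by blast
  then have "h x = h c"
    by simp
  also have "h c = 0"
    using \<open>g c = 0\<close> unfolding h_def by simp
  finally show ?thesis
    unfolding h_def by simp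
qed

lemma zero_of_order_ge_Lop:
  "smooth_fun f \<Longrightarrow> zero_of_order_ge f c (m + length \<mu>s) \<Longrightarrow> zero_of_order_ge (Lop \<mu>s f) c m"
proof (induction \<mu>s arbitrary: m)
  case (Cons \<mu> \<mu>s)
  have "zero_of_order_ge (Lop \<mu>s f) c (Suc m)"
    using Cons.IH[of "Suc m"] Cons.prems by simp
  then show ?case
    unfolding Lop_Cons_Dminus by (rule zero_of_order_ge_Dminus[OF smooth_fun_Lop[OF Cons.prems(1)]])
qed simp

lemma Espace_zero_of_order_ge_length:
  "f \<in> Espace \<mu>s \<Longrightarrow> zero_of_order_ge f c (length \<mu>s) \<Longrightarrow> f x = 0"
proof (induction \<mu>s arbitrary: f)
  case Nil
  then show ?case by (simp add: Espace_def)
next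
  case (Cons \<mu> \<mu>s)
  have f: "smooth_fun f" and L: "\<And>x. Dminus \<mu> (Lop \<mu>s f) x = 0"
    using Cons.prems by (auto simp: Espace_def Lop_Cons_Dminus)
  have "zero_of_order_ge (Lop \<mu>s f) c 1"
    using zero_of_order_ge_Lop[OF f, of c 1 \<mu>s] Cons.prems by simp
  then have "Lop \<mu>s f c = 0"
    by (simp add: zero_of_order_ge_def)
  then have "Lop \<mu>s f y = 0" for y
    by (rule Dminus_eq_0_imp_eq_0[OF smooth_fun_Lop[OF f] L])
  then have "f \<in> Espace \<mu>s"
    using f by (simp add: Espace_def)
  moreover have "zero_of_order_ge f c (length \<mu>s)"
    using Cons.prems(2) by (simp add: zero_of_order_ge_def)
  ultimately show ?case
    by (rule Cons.IH)
qed

lemma triangular_system_solvable: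
  fixes P :: "nat \<Rightarrow> nat \<Rightarrow> 'a::field"
  assumes triangular: "\<And>k j. k < m \<Longrightarrow> j < k \<Longrightarrow> P k j = 0" and diag: "\<And>k. k < m \<Longrightarrow> P k k \<noteq> 0"
  shows "\<exists>\<beta>. \<forall>j<m. (\<Sum>k<m. \<beta> k * P k j) = F j"
  using triangular diag
proof (induction m)
  case 0
  then show ?case by simp
next
  case (Suc m)
  then obtain \<beta> where \<beta>: "\<And>j. j < m \<Longrightarrow> (\<Sum>k<m. \<beta> k * P k j) = F j"
    by (metis less_Suc_eq)
  define \<beta>' where "\<beta>' = \<beta>(m := (F m - (\<Sum>k<m. \<beta> k * P k m)) / P m m)"
  have "(\<Sum>k<Suc m. \<beta>' k * P k j) = F j" if "j < Suc m" for j
  proof -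
    have "(\<Sum>k<Suc m. \<beta>' k * P k j) = (\<Sum>k<m. \<beta> k * P k j) + \<beta>' m * P m j"
      by (simp add: \<beta>'_def)
    moreover have "\<beta>' m * P m j = F j - (\<Sum>k<m. \<beta> k * P k j)"
    proof (cases "j < m")
      case True
      then show ?thesis using \<beta> Suc.prems(1)[of m j] by simp
    next
      case False
      then have "j = m" using that by simp
      then show ?thesis using Suc.prems(2)[of m] by (simp add: \<beta>'_def)
    qed
    ultimately show ?thesis
      by simp
  qed
  then show ?case
    by blast
qed

lemma triangular_system_unique:
  fixes P :: "nat \<Rightarrow> nat \<Rightarrow> 'a::field"
  assumes triangular: "\<And>k j. k < m \<Longrightarrow> j < k \<Longrightarrow> P k j = 0" and diag: "\<And>k. k < m \<Longrightarrow> P k k \<noteq> 0"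
    and zero: "\<And>j. j < m \<Longrightarrow> (\<Sum>k<m. \<beta> k * P k j) = 0"
  shows "k < m \<Longrightarrow> \<beta> k = 0"
proof (induction k rule: less_induct)
  case (less k)
  have "(\<Sum>i<m. \<beta> i * P i k) = (\<Sum>i\<in>{k}. \<beta> i * P i k)"
  proof (rule sum.mono_neutral_right)
    show "\<forall>i\<in>{..<m} - {k}. \<beta> i * P i k = 0"
      using less triangular[of _ k] by (auto simp: nat_neq_iff)
  qed (use less.prems in auto)
  then show ?case
    using zero[OF less.prems] diag[OF less.prems] by simp
qed

lemma Espace_expansion:
  assumes p: "\<And>k. k \<le> n \<Longrightarrow> p k \<in> Espace L" "\<And>k. k \<le> n \<Longrightarrow> zero_of_order (p k) a k"
    and L: "length L = Suc n" and f: "f \<in> Espace L"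
  shows "\<exists>\<beta>. \<forall>x. f x = (\<Sum>k\<le>n. \<beta> k * p k x)"
proof -
  have "\<exists>\<beta>. \<forall>j<Suc n. (\<Sum>k<Suc n. \<beta> k * (Dv ^^ j) (p k) a) = (Dv ^^ j) f a"
    by (rule triangular_system_solvable) (use p(2) in \<open>auto simp: zero_of_order_def zero_of_order_ge_def\<close>)
  then obtain \<beta> where \<beta>: "\<And>j. j < Suc n \<Longrightarrow> (\<Sum>k\<le>n. \<beta> k * (Dv ^^ j) (p k) a) = (Dv ^^ j) f a"
    by (auto simp: lessThan_Suc_atMost)
  define r where "r = (\<lambda>x. (-1) * (\<Sum>k\<le>n. \<beta> k * p k x) + f x)"
  have r: "r \<in> Espace L"
    unfolding r_def by (intro Espace_lincomb Espace_sum f) (use p in auto)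
  have p_smooth: "\<And>k. k \<in> {..n} \<Longrightarrow> smooth_fun (p k)"
    using p(1) Espace_smooth by auto
  have sum_smooth: "smooth_fun (\<lambda>x. \<Sum>k\<le>n. \<beta> k * p k x)"
    by (rule smooth_fun_sum) (use p_smooth in auto)
  have Dv_iter_sum_p: "(Dv ^^ j) (\<lambda>x. \<Sum>k\<le>n. \<beta> k * p k x) = (\<lambda>x. \<Sum>k\<le>n. \<beta> k * (Dv ^^ j) (p k) x)" for j
    by (rule Dv_iter_sum) (use p_smooth in auto)
  have "(Dv ^^ j) r a = (-1) * (\<Sum>k\<le>n. \<beta> k * (Dv ^^ j) (p k) a) + (Dv ^^ j) f a" for j
    using Dv_iter_lincomb[OF sum_smooth Espace_smooth[OF f], of j "-1"]
    by (simp add: r_def Dv_iter_sum_p)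
  then have "(Dv ^^ j) r a = 0" if "j < Suc n" for j
    using \<beta>[OF that] by simp
  then have "zero_of_order_ge r a (length L)"
    using L by (simp add: zero_of_order_ge_def)
  then have "r x = 0" for x
    by (rule Espace_zero_of_order_ge_length[OF r])
  then show ?thesis
    by (auto simp: r_def)
qed

lemma Dv_iter_vanishing_on_interval:
  assumes g: "smooth_fun g" and "a < b" and z: "\<And>y. y \<in> {a..b} \<Longrightarrow> g y = 0"
  shows "x \<in> {a..b} \<Longrightarrow> (Dv ^^ j) g x = 0"
proof (induction j arbitrary: x)
  case 0
  then show ?case using z by simp
next
  case (Suc j)
  have "((Dv ^^ j) g has_vector_derivative Dv ((Dv ^^ j) g) x) (at x within {a..b})"
    by (rule has_vector_derivative_at_within[OF has_vector_derivative_Dv[OF smooth_fun_differentiable_iter[OF g]]])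
  moreover have "((Dv ^^ j) g has_vector_derivative 0) (at x within {a..b})"
    by (rule has_vector_derivative_transform[of x "{a..b}" _ "\<lambda>x. 0"])
      (use Suc in auto)
  ultimately have "Dv ((Dv ^^ j) g) x = 0"
    using vector_derivative_unique_within_closed_interval[OF \<open>a < b\<close>] Suc.prems by auto
  then show ?case
    by simp
qed

lemma lincomb_vanishing_on_interval:
  assumes p: "\<And>k. k \<le> n \<Longrightarrow> smooth_fun (p k)" "\<And>k. k \<le> n \<Longrightarrow> zero_of_order (p k) a k"
    and "a < b" and z: "\<And>x. x \<in> {a..b} \<Longrightarrow> (\<Sum>k\<le>n. \<beta> k * p k x) = 0"
  shows "k \<le> n \<Longrightarrow> \<beta> k = 0"
proof -
  have "(\<Sum>k<Suc n. \<beta> k * (Dv ^^ j) (p k) a) = 0" for j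
  proof -
    have "(Dv ^^ j) (\<lambda>x. \<Sum>k\<le>n. \<beta> k * p k x) a = 0"
      by (rule Dv_iter_vanishing_on_interval) (use p \<open>a < b\<close> z in \<open>auto intro: smooth_fun_sum\<close>)
    then show ?thesis
      by (subst (asm) Dv_iter_sum) (use p in \<open>auto simp: lessThan_Suc_atMost\<close>)
  qed
  moreover assume "k \<le> n"
  ultimately show ?thesis
    by (intro triangular_system_unique[of "Suc n" "\<lambda>k j. (Dv ^^ j) (p k) a" \<beta> k])
      (use p(2) in \<open>auto simp: zero_of_order_def zero_of_order_ge_def\<close>)
qed

definition real_valued :: "(real \<Rightarrow> complex) \<Rightarrow> bool" where
  "real_valued f \<longleftrightarrow> (\<forall>x. Im (f x) = 0)"

lemma real_valued_eq_0: "real_valued f \<Longrightarrow> Re (f x) = 0 \<Longrightarrow> f x = 0"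
  unfolding real_valued_def by (simp add: complex_eq_iff)

lemma real_valued_uminus: "real_valued f \<Longrightarrow> real_valued (\<lambda>x. - f x)"
  unfolding real_valued_def by simp

lemma real_valued_sum:
  "(\<And>k. k \<in> K \<Longrightarrow> real_valued (g k)) \<Longrightarrow> real_valued (\<lambda>x. \<Sum>k\<in>K. of_real (c k) * g k x)"
  unfolding real_valued_def by (auto simp: Im_sum intro!: sum.neutral)

lemma real_valued_Dminus:
  assumes "real_valued f" "smooth_fun f"
  shows "real_valued (Dminus (of_real l) f)"
proof -
  have "Im (Dv f x) = 0" for x
  proof -
    have "((\<lambda>x. Im (f x)) has_field_derivative Im (Dv f x)) (at x)"
      by (rule has_field_derivative_Im[OF has_vector_derivative_Dv[OF smooth_fun_differentiable[OF assms(2)]]])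
    then have "((\<lambda>x. 0) has_field_derivative Im (Dv f x)) (at x)"
      using assms(1) by (simp add: real_valued_def)
    then show ?thesis
      using DERIV_const DERIV_unique by blast
  qed
  then show ?thesis
    using assms(1) by (simp add: real_valued_def Dminus_def)
qed

lemma real_valued_Dminus_iter:
  "real_valued f \<Longrightarrow> smooth_fun f \<Longrightarrow> real_valued ((Dminus (of_real l) ^^ k) f)"
  by (induction k) (auto intro: real_valued_Dminus smooth_fun_Dminus_iter)

lemma real_valued_expansion:
  assumes "real_valued f" "\<And>k. k \<in> K \<Longrightarrow> real_valued (g k)" "f x = (\<Sum>k\<in>K. \<beta> k * g k x)"
  shows "f x = (\<Sum>k\<in>K. of_real (Re (\<beta> k)) * g k x)"
proof (rule complex_eqI)
  have "Re (f x) = (\<Sum>k\<in>K. Re (\<beta> k * g k x))"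
    using assms(3) by (simp add: Re_sum)
  also have "\<dots> = (\<Sum>k\<in>K. Re (of_real (Re (\<beta> k)) * g k x))"
    using assms(2) by (intro sum.cong) (auto simp: real_valued_def)
  finally show "Re (f x) = Re (\<Sum>k\<in>K. of_real (Re (\<beta> k)) * g k x)"
    by (simp add: Re_sum)
  show "Im (f x) = Im (\<Sum>k\<in>K. of_real (Re (\<beta> k)) * g k x)"
    using assms(1,2) by (auto simp: real_valued_def Im_sum intro!: sum.neutral)
qed

subsection \<open>Rolle's theorem for \<open>D - l\<close>\<close>

text \<open>The weight \<open>e\<^sup>-\<^sup>l\<^sup>x\<close> turns \<open>D - l\<close> into \<open>D\<close>: the derivative of
  \<open>e\<^sup>-\<^sup>l\<^sup>x Re f\<close> is \<open>e\<^sup>-\<^sup>l\<^sup>x Re ((D - l) f)\<close>.\<close>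

lemma Dminus_mean_value:
  assumes f: "smooth_fun f" and "x < y"
  shows "\<exists>z. x < z \<and> z < y \<and>
    exp (- l * y) * Re (f y) - exp (- l * x) * Re (f x) = (y - x) * (exp (- l * z) * Re (Dminus (of_real l) f z))"
proof -
  have "((\<lambda>t. exp (- l * t) * Re (f t)) has_real_derivative exp (- l * t) * Re (Dminus (of_real l) f t)) (at t)" for t
  proof -
    have "((\<lambda>t. exp (- l * t) * Re (f t)) has_real_derivative
        exp (- l * t) * (- l) * Re (f t) + Re (Dv f t) * exp (- l * t)) (at t)"
      by (intro DERIV_mult has_field_derivative_Re has_vector_derivative_Dv smooth_fun_differentiable f)
        (auto intro!: derivative_eq_intros)
    then show ?thesis
      by (simp add: Dminus_def algebra_simps)
  qed
  then show ?thesis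
    using MVT2[OF \<open>x < y\<close>, of "\<lambda>t. exp (- l * t) * Re (f t)"
        "\<lambda>t. exp (- l * t) * Re (Dminus (of_real l) f t)"] by blast
qed

lemma Dminus_rolle:
  assumes f: "smooth_fun f" "real_valued f" and "x < y" "f x = 0" "f y = 0"
  shows "\<exists>z. x < z \<and> z < y \<and> Dminus (of_real l) f z = 0"
proof -
  obtain z where z: "x < z" "z < y"
    and "exp (- l * y) * Re (f y) - exp (- l * x) * Re (f x) = (y - x) * (exp (- l * z) * Re (Dminus (of_real l) f z))"
    using Dminus_mean_value[OF f(1) \<open>x < y\<close>] by blast
  then have "Re (Dminus (of_real l) f z) = 0"
    using assms by simp
  then show ?thesis
    using z real_valued_eq_0[OF real_valued_Dminus[OF f(2,1)]] by blast
qed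

lemma Dminus_rolle_set:
  assumes "smooth_fun f" "real_valued f" "x < y" "P \<Longrightarrow> f x = 0 \<and> f y = 0"
  obtains A where "finite A" "A \<subseteq> {x<..<y}" "\<forall>z\<in>A. Dminus (of_real l) f z = 0"
    "card A = (if P then 1 else 0)"
proof (cases P)
  case True
  then obtain z where "x < z" "z < y" "Dminus (of_real l) f z = 0"
    using Dminus_rolle[OF assms(1-3)] assms(4) by blast
  then show ?thesis
    using that[of "{z}"] True by auto
qed (use that[of "{}"] in auto)

lemma Dminus_vanishing_imp_vanishing:
  assumes f: "smooth_fun f" "real_valued f" and D: "\<And>t. t \<in> {a..b} \<Longrightarrow> Dminus (of_real l) f t = 0"
    and c: "c \<in> {a..b}" "f c = 0" and t: "t \<in> {a..b}"
  shows "f t = 0"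
proof -
  have weighted_const: "exp (- l * u) * Re (f u) = exp (- l * s) * Re (f s)"
    if "s \<in> {a..b}" "u \<in> {a..b}" "s < u" for s u
  proof -
    obtain z where "s < z" "z < u"
      and "exp (- l * u) * Re (f u) - exp (- l * s) * Re (f s) = (u - s) * (exp (- l * z) * Re (Dminus (of_real l) f z))"
      using Dminus_mean_value[OF f(1) \<open>s < u\<close>] by blast
    moreover have "Dminus (of_real l) f z = 0"
      using D \<open>s < z\<close> \<open>z < u\<close> that by auto
    ultimately show ?thesis
      by simp
  qed
  have "exp (- l * t) * Re (f t) = 0"
    using weighted_const[OF c(1) t] weighted_const[OF t c(1)] c(2) by (cases t c rule: linorder_cases) auto
  then show ?thesis
    by (simp add: real_valued_eq_0[OF f(2)])
qed

lemma Dminus_iter_pos_imp_pos_right: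
  assumes "smooth_fun f" "real_valued f" "Dminus_zero_ge (of_real l) f a m"
    "Re ((Dminus (of_real l) ^^ m) f a) > 0"
  shows "\<exists>\<epsilon>>0. \<forall>t. a < t \<and> t < a + \<epsilon> \<longrightarrow> Re (f t) > 0"
  using assms
proof (induction m arbitrary: f)
  case 0
  have "isCont (\<lambda>t. Re (f t)) a"
    by (intro continuous_Re differentiable_imp_continuous_within smooth_fun_differentiable 0)
  then obtain r where "r > 0" "\<And>t. t \<noteq> a \<Longrightarrow> \<bar>a - t\<bar> < r \<Longrightarrow> Re (f t) > 0"
    using LIM_fun_gt_zero[of "\<lambda>t. Re (f t)" "Re (f a)" a] 0 by (auto simp: isCont_def)
  then show ?case
    by (intro exI[of _ r]) auto
next
  case (Suc m)
  have fa: "f a = 0" and z: "Dminus_zero_ge (of_real l) (Dminus (of_real l) f) a m"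
    using Suc.prems(3) by (auto simp: Dminus_zero_ge_Suc_Dminus)
  have "Re ((Dminus (of_real l) ^^ m) (Dminus (of_real l) f) a) > 0"
    using Suc.prems(4) by (simp add: Dminus_iter_Suc del: funpow.simps)
  from Suc.IH[OF smooth_fun_Dminus[OF Suc.prems(1)] real_valued_Dminus[OF Suc.prems(2,1)] z this]
  obtain \<epsilon> where \<epsilon>: "\<epsilon> > 0" "\<And>t. a < t \<Longrightarrow> t < a + \<epsilon> \<Longrightarrow> Re (Dminus (of_real l) f t) > 0"
    by blast
  have "Re (f t) > 0" if t: "a < t" "t < a + \<epsilon>" for t
  proof -
    obtain z where "a < z" "z < t"
      and eq: "exp (- l * t) * Re (f t) - exp (- l * a) * Re (f a) = (t - a) * (exp (- l * z) * Re (Dminus (of_real l) f z))"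
      using Dminus_mean_value[OF Suc.prems(1) t(1)] by blast
    then have "exp (- l * t) * Re (f t) > 0"
      using \<epsilon>(2)[of z] t fa by simp
    then show ?thesis
      by (simp add: zero_less_mult_iff)
  qed
  then show ?case
    using \<epsilon>(1) by blast
qed

lemma Dminus_iter_pos_at_left_end:
  assumes f: "smooth_fun f" "real_valued f" and z: "Dminus_zero_ge (of_real l) f a m"
    and nz: "(Dminus (of_real l) ^^ m) f a \<noteq> 0"
    and "a < b" and nonneg: "\<And>t. t \<in> {a<..<b} \<Longrightarrow> Re (f t) \<ge> 0"
  shows "Re ((Dminus (of_real l) ^^ m) f a) > 0"
proof (rule ccontr)
  assume "\<not> ?thesis"
  moreover have "Re ((Dminus (of_real l) ^^ m) f a) \<noteq> 0"
    using nz real_valued_eq_0[OF real_valued_Dminus_iter[OF f(2,1)]] by blast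
  ultimately have "Re ((Dminus (of_real l) ^^ m) (\<lambda>x. - f x) a) > 0"
    by (simp add: Dminus_iter_uminus f)
  then obtain \<epsilon> where \<epsilon>: "\<epsilon> > 0" "\<forall>t. a < t \<and> t < a + \<epsilon> \<longrightarrow> Re (- f t) > 0"
    using Dminus_iter_pos_imp_pos_right[OF smooth_fun_uminus[OF f(1)] real_valued_uminus[OF f(2)]]
      z[folded Dminus_zero_ge_uminus[OF f(1)]] by blast
  define t where "t = a + min \<epsilon> (b - a) / 2"
  have "a < t" "t < a + \<epsilon>" "t < b"
    using \<epsilon>(1) \<open>a < b\<close> by (auto simp: t_def min_def field_simps)
  then show False
    using \<epsilon>(2) nonneg[of t] by auto
qed

lemma continuous_nonvanishing_pos:
  fixes f :: "real \<Rightarrow> real"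
  assumes cont: "continuous_on {a..b} f" and nz: "\<And>t. t \<in> {a<..<b} \<Longrightarrow> f t \<noteq> 0"
    and z: "z \<in> {a<..<b}" "f z > 0" and t: "t \<in> {a<..<b}"
  shows "f t > 0"
proof (rule ccontr)
  assume "\<not> f t > 0"
  then have ft: "f t \<le> 0"
    by simp
  obtain w where w: "w \<in> {min z t..max z t}" "f w = 0"
  proof (cases "z \<le> t")
    case True
    have "continuous_on {z..t} f"
      using continuous_on_subset[OF cont] z t by auto
    then obtain w where "z \<le> w" "w \<le> t" "f w = 0"
      using IVT2'[of f t 0 z] ft z(2) True by auto
    then show ?thesis
      using that[of w] True by simp
  next
    case False
    have "continuous_on {t..z} f"
      using continuous_on_subset[OF cont] z t by auto
    then obtain w where "t \<le> w" "w \<le> z" "f w = 0"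
      using IVT'[of f t 0 z] ft z(2) False by auto
    then show ?thesis
      using that[of w] False by simp
  qed
  have "w \<in> {a<..<b}"
    using w(1) z(1) t by (auto simp: min_def max_def split: if_splits)
  then show False
    using nz w(2) by blast
qed

subsection \<open>Zero counting in extended Chebyshev spaces\<close>

lemma ext_chebyshev_vanishes:
  assumes V: "ext_chebyshev V m a b" and u: "u \<in> V" "smooth_fun u" and "a < b"
    and za: "Dminus_zero_ge \<mu> u a \<alpha>" and zb: "Dminus_zero_ge \<mu> u b \<beta>"
    and C: "finite C" "C \<subseteq> {a<..<b}" "\<And>c. c \<in> C \<Longrightarrow> u c = 0"
    and count: "m < int (\<alpha> + \<beta> + card C)" and t: "t \<in> {a..b}"
  shows "u t = 0"
proof (rule ccontr)
  assume "u t \<noteq> 0"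
  define S where "S = insert a (insert b C)"
  define mult where "mult = (\<lambda>x. if x = a then \<alpha> else if x = b then \<beta> else (1::nat))"
  have S: "finite S" "S \<subseteq> {a..b}"
    using C \<open>a < b\<close> by (auto simp: S_def)
  have "zero_of_order_ge u c (mult c)" if "c \<in> S" for c
  proof -
    have "c = a \<or> c = b \<or> (c \<in> C \<and> c \<noteq> a \<and> c \<noteq> b)"
      using that by (auto simp: S_def)
    then show ?thesis
      using za zb C(3)[of c] \<open>a < b\<close> zero_of_order_ge_iff_Dminus[OF u(2)]
      by (auto simp: mult_def zero_of_order_ge_def)
  qed
  then have "int (\<Sum>c\<in>S. mult c) \<le> m"
    using V u(1) S t \<open>u t \<noteq> 0\<close> unfolding ext_chebyshev_def by blast
  moreover have "(\<Sum>c\<in>S. mult c) = \<alpha> + \<beta> + card C"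
  proof -
    have "(\<Sum>c\<in>C. mult c) = (\<Sum>c\<in>C. 1)"
      by (rule sum.cong) (use C \<open>a < b\<close> in \<open>auto simp: mult_def\<close>)
    then have "(\<Sum>c\<in>C. mult c) = card C"
      by simp
    moreover have "a \<notin> insert b C" "b \<notin> C" "mult a = \<alpha>" "mult b = \<beta>"
      using C \<open>a < b\<close> by (auto simp: mult_def)
    ultimately show ?thesis
      using C(1) by (simp add: S_def)
  qed
  ultimately have "int (\<alpha> + \<beta> + card C) \<le> m"
    by metis
  with count show False
    by linarith
qed

definition zero_count_below :: "nat \<Rightarrow> complex \<Rightarrow> real \<Rightarrow> real \<Rightarrow> (real \<Rightarrow> complex) \<Rightarrow> bool" where
  "zero_count_below N \<mu> a b h \<longleftrightarrow>
     (\<forall>\<alpha> \<beta> C. Dminus_zero_ge \<mu> h a \<alpha> \<and> Dminus_zero_ge \<mu> h b \<beta> \<and>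
        finite C \<and> C \<subseteq> {a<..<b} \<and> card C \<le> 1 \<and> (\<forall>c\<in>C. h c = 0) \<and> N \<le> \<alpha> + \<beta> + card C
        \<longrightarrow> (\<forall>t\<in>{a..b}. h t = 0))"

lemma zero_count_belowD:
  assumes "zero_count_below N \<mu> a b h" "Dminus_zero_ge \<mu> h a \<alpha>" "Dminus_zero_ge \<mu> h b \<beta>"
    "finite C" "C \<subseteq> {a<..<b}" "card C \<le> 1" "\<And>c. c \<in> C \<Longrightarrow> h c = 0" "N \<le> \<alpha> + \<beta> + card C"
    "t \<in> {a..b}"
  shows "h t = 0"
  using assms unfolding zero_count_below_def by blast

lemma zero_count_below_chebyshev:
  assumes "ext_chebyshev V (int N - 1) a b" "h \<in> V" "smooth_fun h" "a < b"
  shows "zero_count_below N \<mu> a b h"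
  unfolding zero_count_below_def
  using ext_chebyshev_vanishes[OF assms(1-4)] by fastforce

text \<open>If \<open>(D - l) h\<close> lies in a Chebyshev space of one dimension less, Rolle's theorem
  moves the zeros of \<open>h\<close> to zeros of \<open>(D - l) h\<close>, losing one in the count.\<close>

lemma Dminus_zeros_from_endpoints:
  assumes h: "smooth_fun h" "real_valued h" and "a < b" "N \<ge> 1"
    and za: "Dminus_zero_ge (of_real l) h a \<alpha>" and zb: "Dminus_zero_ge (of_real l) h b \<beta>"
    and count: "N \<le> \<alpha> + \<beta>"
  obtains A p where "finite A" "A \<subseteq> {a<..<b}" "\<forall>z\<in>A. Dminus (of_real l) h z = 0"
    "N - 1 \<le> (\<alpha> - 1) + (\<beta> - 1) + card A" "p \<in> {a..b}" "h p = 0"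
proof -
  have ha: "\<alpha> \<ge> 1 \<Longrightarrow> h a = 0" and hb: "\<beta> \<ge> 1 \<Longrightarrow> h b = 0"
    using za zb by (auto simp: Dminus_zero_ge_def)
  obtain A where A: "finite A" "A \<subseteq> {a<..<b}" "\<forall>z\<in>A. Dminus (of_real l) h z = 0"
    "card A = (if \<alpha> \<ge> 1 \<and> \<beta> \<ge> 1 then 1 else 0)"
    using Dminus_rolle_set[OF h \<open>a < b\<close>, of "\<alpha> \<ge> 1 \<and> \<beta> \<ge> 1"] ha hb by blast
  have count_A: "N - 1 \<le> (\<alpha> - 1) + (\<beta> - 1) + card A"
    using count A(4) by (cases "\<alpha> \<ge> 1"; cases "\<beta> \<ge> 1"; simp; arith)
  obtain p where p: "p \<in> {a..b}" "h p = 0"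
  proof (cases "\<alpha> \<ge> 1")
    case True
    then show ?thesis
      using that[of a] ha \<open>a < b\<close> by simp
  next
    case False
    then have "\<beta> \<ge> 1"
      using count \<open>N \<ge> 1\<close> by simp
    then show ?thesis
      using that[of b] hb \<open>a < b\<close> by simp
  qed
  show ?thesis
    by (rule that[OF A(1-3) count_A p])
qed

lemma Dminus_zeros_around_interior_zero:
  assumes h: "smooth_fun h" "real_valued h" and c: "a < c" "c < b" "h c = 0"
    and za: "Dminus_zero_ge (of_real l) h a \<alpha>" and zb: "Dminus_zero_ge (of_real l) h b \<beta>"
    and count: "N \<le> \<alpha> + \<beta> + 1"
  obtains A where "finite A" "A \<subseteq> {a<..<b}" "\<forall>z\<in>A. Dminus (of_real l) h z = 0"
    "N - 1 \<le> (\<alpha> - 1) + (\<beta> - 1) + card A"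
proof -
  have ha: "\<alpha> \<ge> 1 \<Longrightarrow> h a = 0" and hb: "\<beta> \<ge> 1 \<Longrightarrow> h b = 0"
    using za zb by (auto simp: Dminus_zero_ge_def)
  obtain A1 where A1: "finite A1" "A1 \<subseteq> {a<..<c}" "\<forall>z\<in>A1. Dminus (of_real l) h z = 0"
    "card A1 = (if \<alpha> \<ge> 1 then 1 else 0)"
    using Dminus_rolle_set[OF h \<open>a < c\<close>, of "\<alpha> \<ge> 1"] ha \<open>h c = 0\<close> by blast
  obtain A2 where A2: "finite A2" "A2 \<subseteq> {c<..<b}" "\<forall>z\<in>A2. Dminus (of_real l) h z = 0"
    "card A2 = (if \<beta> \<ge> 1 then 1 else 0)"
    using Dminus_rolle_set[OF h \<open>c < b\<close>, of "\<beta> \<ge> 1"] hb \<open>h c = 0\<close> by blast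
  have "A1 \<inter> A2 = {}"
    using A1(2) A2(2) by fastforce
  then have "card (A1 \<union> A2) = card A1 + card A2"
    by (rule card_Un_disjoint[OF A1(1) A2(1)])
  then have "N - 1 \<le> (\<alpha> - 1) + (\<beta> - 1) + card (A1 \<union> A2)"
    using count A1(4) A2(4) by (cases "\<alpha> \<ge> 1"; cases "\<beta> \<ge> 1"; simp; arith)
  moreover have "A1 \<union> A2 \<subseteq> {a<..<b}"
    using A1(2) A2(2) c by auto
  ultimately show ?thesis
    using that[of "A1 \<union> A2"] A1(1,3) A2(1,3) by blast
qed

lemma zero_count_below_Dminus_chebyshev:
  assumes V: "ext_chebyshev V (int N - 2) a b" and DhV: "Dminus (of_real l) h \<in> V"
    and h: "smooth_fun h" "real_valued h" and "a < b" "N \<ge> 1"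
  shows "zero_count_below N (of_real l) a b h"
  unfolding zero_count_below_def
proof (intro allI impI ballI)
  fix \<alpha> \<beta> C t
  assume "Dminus_zero_ge (of_real l) h a \<alpha> \<and> Dminus_zero_ge (of_real l) h b \<beta> \<and> finite C \<and>
    C \<subseteq> {a<..<b} \<and> card C \<le> 1 \<and> (\<forall>c\<in>C. h c = 0) \<and> N \<le> \<alpha> + \<beta> + card C"
  and t: "t \<in> {a..b}"
  then have za: "Dminus_zero_ge (of_real l) h a \<alpha>" and zb: "Dminus_zero_ge (of_real l) h b \<beta>"
    and C: "finite C" "C \<subseteq> {a<..<b}" "card C \<le> 1" "\<forall>c\<in>C. h c = 0" and count: "N \<le> \<alpha> + \<beta> + card C"
    by auto
  obtain A p where A: "finite A" "A \<subseteq> {a<..<b}" "\<forall>z\<in>A. Dminus (of_real l) h z = 0"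
    and count': "N - 1 \<le> (\<alpha> - 1) + (\<beta> - 1) + card A" and p: "p \<in> {a..b}" "h p = 0"
  proof (cases "C = {}")
    case True
    then have "N \<le> \<alpha> + \<beta>"
      using count by simp
    with Dminus_zeros_from_endpoints[OF h \<open>a < b\<close> \<open>N \<ge> 1\<close> za zb] that show ?thesis
      by blast
  next
    case False
    then have "card C = 1"
      using C(1,3) by (simp add: le_Suc_eq)
    then obtain c where c: "C = {c}"
      by (rule card_1_singletonE)
    then have c': "a < c" "c < b" "h c = 0" "N \<le> \<alpha> + \<beta> + 1"
      using C(2,4) count by auto
    with Dminus_zeros_around_interior_zero[OF h c'(1-3) za zb c'(4)] that show ?thesis
      by fastforce
  qed
  have "Dminus (of_real l) h y = 0" if "y \<in> {a..b}" for y
  proof (rule ext_chebyshev_vanishes[OF V DhV smooth_fun_Dminus[OF h(1)] \<open>a < b\<close>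
        Dminus_zero_ge_Dminus[OF za] Dminus_zero_ge_Dminus[OF zb] A(1,2) _ _ that])
    show "Dminus (of_real l) h z = 0" if "z \<in> A" for z
      using A(3) that by blast
    show "int N - 2 < int (\<alpha> - 1 + (\<beta> - 1) + card A)"
      using count' \<open>N \<ge> 1\<close> by linarith
  qed
  then show "h t = 0"
    using Dminus_vanishing_imp_vanishing[OF h _ p t] by blast
qed

definition linexp :: "complex \<Rightarrow> complex \<Rightarrow> complex \<Rightarrow> real \<Rightarrow> complex" where
  "linexp A B \<mu> = (\<lambda>x. (A * of_real x + B) * exp (\<mu> * of_real x))"

lemma has_vector_derivative_linexp:
  "(linexp A B \<mu> has_vector_derivative linexp (\<mu> * A) (A + \<mu> * B) \<mu> x) (at x)"
proof -
  have "((\<lambda>z. (A * z + B) * exp (\<mu> * z)) has_field_derivative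
      ((\<mu> * A) * of_real x + (A + \<mu> * B)) * exp (\<mu> * of_real x)) (at (of_real x))"
    by (auto intro!: derivative_eq_intros simp: algebra_simps)
  from has_vector_derivative_real_field[OF this] show ?thesis
    by (simp add: linexp_def)
qed

lemma Dv_linexp: "Dv (linexp A B \<mu>) = linexp (\<mu> * A) (A + \<mu> * B) \<mu>"
  using Dv_eqI[OF has_vector_derivative_linexp] by blast

lemma smooth_fun_linexp: "smooth_fun (linexp A B \<mu>)"
proof -
  have "\<exists>A' B'. (Dv ^^ k) (linexp A B \<mu>) = linexp A' B' \<mu>" for k
  proof (induction k)
    case (Suc k)
    then obtain A' B' where "(Dv ^^ k) (linexp A B \<mu>) = linexp A' B' \<mu>"
      by blast
    then show ?case
      by (auto simp: Dv_linexp)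
  qed auto
  then show ?thesis
    unfolding smooth_fun_def by (metis has_vector_derivative_linexp differentiableI_vector)
qed

lemma Dminus_linexp: "Dminus \<nu> (linexp A B \<mu>) = linexp ((\<mu> - \<nu>) * A) (A + (\<mu> - \<nu>) * B) \<mu>"
  unfolding Dminus_def Dv_linexp by (auto simp: linexp_def algebra_simps)

lemma linexp_in_Espace: "linexp A B \<mu> \<in> Espace (\<mu> # \<mu> # \<mu>s)"
proof -
  have "\<exists>A' B'. Lop \<mu>s (linexp A B \<mu>) = linexp A' B' \<mu>"
  proof (induction \<mu>s)
    case (Cons \<nu> \<mu>s)
    then obtain A' B' where "Lop \<mu>s (linexp A B \<mu>) = linexp A' B' \<mu>"
      by blast
    then show ?case
      by (auto simp: Lop_Cons_Dminus Dminus_linexp)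
  qed auto
  then obtain A' B' where "Lop \<mu>s (linexp A B \<mu>) = linexp A' B' \<mu>"
    by blast
  then have "Lop (\<mu> # \<mu> # \<mu>s) (linexp A B \<mu>) = linexp 0 0 \<mu>"
    by (simp add: Lop_Cons_Dminus Dminus_linexp)
  then show ?thesis
    using smooth_fun_linexp by (simp add: Espace_def linexp_def)
qed

lemma linexp_of_real: "linexp A B (of_real l) x = (A * of_real x + B) * of_real (exp (l * x))"
  by (simp add: linexp_def exp_of_real[symmetric])

lemma sum_by_parts:
  fixes \<tau> :: "nat \<Rightarrow> real" and h :: "nat \<Rightarrow> complex"
  shows "(\<Sum>k\<le>n. of_real (\<tau> k) * (h k - h (Suc k))) =
    of_real (\<tau> 0) * h 0 - of_real (\<tau> n) * h (Suc n) + (\<Sum>j<n. of_real (\<tau> (Suc j) - \<tau> j) * h (Suc j))"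
  by (induction n) (simp_all add: algebra_simps)

subsection \<open>Positive coefficients\<close>

locale positive_expansion =
  fixes l a b :: real and N :: nat and g :: "nat \<Rightarrow> real \<Rightarrow> complex" and \<gamma> :: "nat \<Rightarrow> real"
    and e :: "real \<Rightarrow> complex"
  assumes a_less_b: "a < b"
    and g_smooth: "\<And>k. k \<le> N \<Longrightarrow> smooth_fun (g k)"
    and g_real: "\<And>k. k \<le> N \<Longrightarrow> real_valued (g k)"
    and g_nonneg: "\<And>k t. k \<le> N \<Longrightarrow> t \<in> {a<..<b} \<Longrightarrow> Re (g k t) \<ge> 0"
    and g_zero_a: "\<And>k. k \<le> N \<Longrightarrow> Dminus_zero_ge (of_real l) (g k) a k"
    and g_exact_a: "\<And>k. k \<le> N \<Longrightarrow> (Dminus (of_real l) ^^ k) (g k) a \<noteq> 0"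
    and g_zero_b: "\<And>k. k \<le> N \<Longrightarrow> Dminus_zero_ge (of_real l) (g k) b (N - k)"
    and e_expansion: "\<And>x. e x = (\<Sum>k\<le>N. of_real (\<gamma> k) * g k x)"
    and e_kernel: "\<And>x. Dminus (of_real l) e x = 0"
    and e_pos_a: "Re (e a) > 0"
    and zero_count: "\<And>\<beta>. zero_count_below N (of_real l) a b
      (\<lambda>x. \<Sum>k\<le>N. of_real (\<beta> k) * Dminus (of_real l) (g k) x)"
begin

definition S :: "nat \<Rightarrow> real \<Rightarrow> complex" where
  "S k = (\<lambda>x. \<Sum>j<k. of_real (\<gamma> j) * g j x)"

definition R :: "nat \<Rightarrow> real \<Rightarrow> complex" where
  "R k = (\<lambda>x. \<Sum>j\<in>{k..N}. of_real (\<gamma> j) * g j x)"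

text \<open>Since \<open>(D - l) e = 0\<close>, \<open>H k = - (D - l) (S k)\<close>; the \<open>H (Suc j)\<close> play the role of
  the \<open>g j\<close> for the derived expansion of one dimension less.\<close>

definition H :: "nat \<Rightarrow> real \<Rightarrow> complex" where
  "H k = Dminus (of_real l) (R k)"

lemma S_smooth: "k \<le> Suc N \<Longrightarrow> smooth_fun (S k)"
  unfolding S_def by (intro smooth_fun_sum) (use g_smooth in auto)

lemma R_smooth: "smooth_fun (R k)"
  unfolding R_def by (intro smooth_fun_sum) (use g_smooth in auto)

lemma H_smooth: "smooth_fun (H k)"
  unfolding H_def by (rule smooth_fun_Dminus[OF R_smooth])

lemma H_real: "real_valued (H k)"
  unfolding H_def R_def
  by (intro real_valued_Dminus smooth_fun_sum real_valued_sum) (use g_smooth g_real in auto)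

lemma e_eq_S_plus_R: "k \<le> Suc N \<Longrightarrow> e x = S k x + R k x"
proof -
  assume "k \<le> Suc N"
  then have "{..N} = {..<k} \<union> {k..N}"
    by auto
  then show ?thesis
    unfolding e_expansion S_def R_def by (simp add: sum.union_disjoint ivl_disj_int)
qed

lemma H_eq_uminus_Dminus_S: "k \<le> Suc N \<Longrightarrow> H k = (\<lambda>x. - Dminus (of_real l) (S k) x)"
proof -
  assume k: "k \<le> Suc N"
  have "e = (\<lambda>x. 1 * S k x + R k x)"
    using e_eq_S_plus_R[OF k] by auto
  then have "Dminus (of_real l) e = (\<lambda>x. 1 * Dminus (of_real l) (S k) x + Dminus (of_real l) (R k) x)"
    using Dminus_lincomb[OF S_smooth[OF k] R_smooth] by metis
  then show ?thesis
    using e_kernel by (auto simp: H_def fun_eq_iff eq_neg_iff_add_eq_0 add.commute)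
qed

lemma H_0: "H 0 x = 0"
proof -
  have "R 0 = e"
    using e_eq_S_plus_R[of 0] by (auto simp: S_def)
  then show ?thesis
    by (simp add: H_def e_kernel)
qed

lemma H_Suc_N: "H (Suc N) x = 0"
  by (simp add: H_def R_def Dminus_def Dv_iter_zero[of 1, simplified])

lemma H_diff: "k \<le> N \<Longrightarrow> H k x - H (Suc k) x = of_real (\<gamma> k) * Dminus (of_real l) (g k) x"
proof -
  assume k: "k \<le> N"
  have "R k = (\<lambda>x. of_real (\<gamma> k) * g k x + R (Suc k) x)"
    using k by (auto simp: R_def sum.atLeast_Suc_atMost)
  then show ?thesis
    unfolding H_def by (simp add: Dminus_lincomb[OF g_smooth[OF k] R_smooth])
qed

lemma H_expansion:
  "H k = (\<lambda>x. \<Sum>j\<le>N. of_real (if k \<le> j then \<gamma> j else 0) * Dminus (of_real l) (g j) x)"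
proof -
  have "R k = (\<lambda>x. \<Sum>j\<le>N. of_real (if k \<le> j then \<gamma> j else 0) * g j x)"
    unfolding R_def by (auto intro!: sum.mono_neutral_cong_left)
  then show ?thesis
    unfolding H_def by (simp only:) (rule Dminus_sum, use g_smooth in auto)
qed

lemma R_zero_a: "Dminus_zero_ge (of_real l) (R k) a k"
  unfolding R_def
  by (rule Dminus_zero_ge_sum) (auto intro: Dminus_zero_ge_mono[OF g_zero_a] g_smooth)

lemma S_zero_b: "k \<le> N \<Longrightarrow> Dminus_zero_ge (of_real l) (S k) b (Suc (N - k))"
  unfolding S_def
  by (rule Dminus_zero_ge_sum) (auto intro: Dminus_zero_ge_mono[OF g_zero_b] g_smooth)

lemma R_iter_at_a: "k \<le> N \<Longrightarrow> (Dminus (of_real l) ^^ k) (R k) a = of_real (\<gamma> k) * (Dminus (of_real l) ^^ k) (g k) a"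
proof -
  assume k: "k \<le> N"
  have "(Dminus (of_real l) ^^ k) (R k) a = (\<Sum>j\<in>{k..N}. of_real (\<gamma> j) * (Dminus (of_real l) ^^ k) (g j) a)"
    unfolding R_def by (subst Dminus_iter_sum) (use g_smooth in auto)
  also have "\<dots> = (\<Sum>j\<in>{k}. of_real (\<gamma> j) * (Dminus (of_real l) ^^ k) (g j) a)"
    using g_zero_a k by (intro sum.mono_neutral_right) (auto simp: Dminus_zero_ge_def)
  finally show ?thesis
    by simp
qed

context
  fixes k assumes k: "1 \<le> k" "k \<le> N"
begin

lemma H_zero_a: "Dminus_zero_ge (of_real l) (H k) a (k - 1)"
  unfolding H_def by (rule Dminus_zero_ge_Dminus[OF R_zero_a])

lemma H_zero_b: "Dminus_zero_ge (of_real l) (H k) b (N - k)"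
  using Dminus_zero_ge_Dminus[OF S_zero_b[OF k(2)]] k
  by (simp add: H_eq_uminus_Dminus_S Dminus_zero_ge_uminus smooth_fun_Dminus S_smooth)

lemma S_at_a: "S k a = e a"
  using R_zero_a[of k, unfolded Dminus_zero_ge_def, rule_format, of 0] e_eq_S_plus_R[of k a] k by simp

lemma S_at_b: "S k b = 0"
  using S_zero_b[OF k(2), unfolded Dminus_zero_ge_def, rule_format, of 0] by simp

lemma H_pos_somewhere: "\<exists>z. a < z \<and> z < b \<and> Re (H k z) > 0"
proof -
  obtain z where z: "a < z" "z < b" and eq: "exp (- l * b) * Re (S k b) - exp (- l * a) * Re (S k a) =
      (b - a) * (exp (- l * z) * Re (Dminus (of_real l) (S k) z))"
    using Dminus_mean_value[OF S_smooth a_less_b, of k l] k by auto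
  have "exp (- l * a) * Re (e a) > 0"
    using e_pos_a by simp
  then have "(b - a) * (exp (- l * z) * Re (Dminus (of_real l) (S k) z)) < 0"
    using eq S_at_a S_at_b by simp
  then have "Re (Dminus (of_real l) (S k) z) < 0"
    using a_less_b by (simp add: mult_less_0_iff)
  then show ?thesis
    using z k by (auto simp: H_eq_uminus_Dminus_S)
qed

lemma H_zero_count: "zero_count_below N (of_real l) a b (H k)"
  using zero_count[of "\<lambda>j. if k \<le> j then \<gamma> j else 0"] by (simp add: H_expansion)

lemma H_not_identically_zero: "(\<forall>t\<in>{a..b}. H k t = 0) \<Longrightarrow> False"
  using H_pos_somewhere by fastforce

lemma H_nonzero_interior: "t \<in> {a<..<b} \<Longrightarrow> H k t \<noteq> 0"
proof
  assume t: "t \<in> {a<..<b}" "H k t = 0"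
  have "H k s = 0" if "s \<in> {a..b}" for s
    by (rule zero_count_belowD[OF H_zero_count H_zero_a H_zero_b, of "{t}"]) (use k t that in auto)
  then show False
    using H_not_identically_zero by blast
qed

lemma H_exact_a: "(Dminus (of_real l) ^^ (k - 1)) (H k) a \<noteq> 0"
proof
  assume "(Dminus (of_real l) ^^ (k - 1)) (H k) a = 0"
  then have "Dminus_zero_ge (of_real l) (H k) a (Suc (k - 1))"
    using H_zero_a Dminus_zero_ge_Suc by blast
  then have "Dminus_zero_ge (of_real l) (H k) a k"
    using k by simp
  then have "H k s = 0" if "s \<in> {a..b}" for s
    by (rule zero_count_belowD[OF H_zero_count _ H_zero_b, of k "{}"]) (use k that in auto)
  then show False
    using H_not_identically_zero by blast
qed

lemma H_pos:
  assumes "t \<in> {a<..<b}"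
  shows "Re (H k t) > 0"
proof -
  obtain z where z: "z \<in> {a<..<b}" "Re (H k z) > 0"
    using H_pos_somewhere by auto
  have "continuous_on {a..b} (\<lambda>t. Re (H k t))"
    by (intro continuous_at_imp_continuous_on ballI continuous_Re
        differentiable_imp_continuous_within smooth_fun_differentiable H_smooth)
  moreover have "Re (H k s) \<noteq> 0" if "s \<in> {a<..<b}" for s
    using H_nonzero_interior[OF that] real_valued_eq_0[OF H_real] by blast
  ultimately show ?thesis
    by (rule continuous_nonvanishing_pos[where f="\<lambda>t. Re (H k t)", OF _ _ z assms])
qed

end

lemma R_iter_pos_at_a: "k \<le> N \<Longrightarrow> Re ((Dminus (of_real l) ^^ k) (R k) a) > 0"
proof (cases k)
  case 0
  then show ?thesis
    using e_eq_S_plus_R[of 0 a] e_pos_a by (simp add: S_def)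
next
  case (Suc k')
  assume "k \<le> N"
  then have k: "1 \<le> k" "k \<le> N"
    using Suc by auto
  have "Re ((Dminus (of_real l) ^^ (k - 1)) (H k) a) > 0"
    by (rule Dminus_iter_pos_at_left_end[OF H_smooth H_real H_zero_a[OF k] H_exact_a[OF k] a_less_b])
      (use H_pos[OF k] in \<open>auto intro: less_imp_le\<close>)
  then show ?thesis
    using Suc by (simp add: H_def Dminus_iter_Suc del: funpow.simps)
qed

theorem coeff_pos: "k \<le> N \<Longrightarrow> \<gamma> k > 0"
proof -
  assume k: "k \<le> N"
  have "Re ((Dminus (of_real l) ^^ k) (g k) a) > 0"
    by (rule Dminus_iter_pos_at_left_end[OF g_smooth g_real g_zero_a g_exact_a a_less_b g_nonneg])
      (use k in auto)
  moreover have "Re ((Dminus (of_real l) ^^ k) (g k) a) * \<gamma> k > 0"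
    using R_iter_pos_at_a[OF k] R_iter_at_a[OF k]
      real_valued_Dminus_iter[OF g_real[OF k] g_smooth[OF k], where l=l and k=k]
    by (simp add: real_valued_def mult.commute)
  ultimately show ?thesis
    by (simp add: zero_less_mult_iff)
qed

end

locale bernstein_setting =
  fixes l :: real and ls :: "complex list" and n :: nat and a b :: real
    and p :: "nat \<Rightarrow> real \<Rightarrow> complex"
  assumes n_pos: "n \<ge> 1" and length_ls: "length ls = n - 1" and a_less_b: "a < b"
    and chebyshev: "ext_chebyshev (Espace ls) (int n - 2) a b"
    and bernstein: "bernstein_basis (Espace (of_real l # of_real l # ls)) n a b p"
    and p_Im: "\<forall>k\<le>n. \<forall>x. Im (p k x) = 0"
    and p_nonneg: "\<forall>k\<le>n. \<forall>x\<in>{a..b}. Re (p k x) \<ge> 0"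
begin

abbreviation E :: "(real \<Rightarrow> complex) set" where
  "E \<equiv> Espace (of_real l # of_real l # ls)"

lemma p_in_E: "k \<le> n \<Longrightarrow> p k \<in> E"
  using bernstein by (simp add: bernstein_basis_def)

lemma p_smooth: "k \<le> n \<Longrightarrow> smooth_fun (p k)"
  using p_in_E by (rule Espace_smooth)

lemma p_real: "k \<le> n \<Longrightarrow> real_valued (p k)"
  using p_Im by (simp add: real_valued_def)

lemma p_zero_a: "k \<le> n \<Longrightarrow> zero_of_order (p k) a k"
  using bernstein by (simp add: bernstein_basis_def)

lemma p_zero_b: "k \<le> n \<Longrightarrow> zero_of_order (p k) b (n - k)"
  using bernstein by (simp add: bernstein_basis_def)

lemma lincomb_at_a: "(\<Sum>k\<le>n. \<beta> k * p k a) = \<beta> 0 * p 0 a"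
proof -
  have "p k a = 0" if "k \<in> {..n} - {0}" for k
    using p_zero_a[of k] that by (auto simp: zero_of_order_def zero_of_order_ge_def)
  then have "(\<Sum>k\<le>n. \<beta> k * p k a) = (\<Sum>k\<in>{0}. \<beta> k * p k a)"
    by (intro sum.mono_neutral_right) auto
  then show ?thesis
    by simp
qed

lemma lincomb_at_b: "(\<Sum>k\<le>n. \<beta> k * p k b) = \<beta> n * p n b"
proof -
  have "p k b = 0" if "k \<in> {..n} - {n}" for k
  proof -
    have "k < n"
      using that by auto
    then show ?thesis
      using p_zero_b[of k] unfolding zero_of_order_def zero_of_order_ge_def
      by (metis funpow_0 less_imp_le zero_less_diff)
  qed
  then have "(\<Sum>k\<le>n. \<beta> k * p k b) = (\<Sum>k\<in>{n}. \<beta> k * p k b)"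
    by (intro sum.mono_neutral_right) auto
  then show ?thesis
    by simp
qed

lemma real_coeff_expansion:
  assumes "f \<in> E" "real_valued f"
  shows "\<exists>\<beta>. \<forall>x. f x = (\<Sum>k\<le>n. of_real (\<beta> k) * p k x)"
proof -
  have "length (of_real l # of_real l # ls :: complex list) = Suc n"
    using length_ls n_pos by simp
  then obtain \<beta> where \<beta>: "\<And>x. f x = (\<Sum>k\<le>n. \<beta> k * p k x)"
    using Espace_expansion[OF p_in_E p_zero_a _ assms(1)] by blast
  have "f x = (\<Sum>k\<le>n. of_real (Re (\<beta> k)) * p k x)" for x
    by (rule real_valued_expansion[OF assms(2) _ \<beta>]) (simp add: p_real)
  then show ?thesis
    by (intro exI[of _ "\<lambda>k. Re (\<beta> k)"]) simp
qed

lemma lincomb_coeffs_unique: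
  assumes "\<And>x. x \<in> {a..b} \<Longrightarrow> (\<Sum>k\<le>n. of_real (\<beta> k) * p k x) = (\<Sum>k\<le>n. of_real (\<beta>' k) * p k x)"
    and "k \<le> n"
  shows "\<beta> k = \<beta>' k"
proof -
  have "of_real (\<beta> k - \<beta>' k) = (0::complex)"
  proof (rule lincomb_vanishing_on_interval[OF p_smooth p_zero_a a_less_b _ \<open>k \<le> n\<close>])
    show "(\<Sum>k\<le>n. of_real (\<beta> k - \<beta>' k) * p k x) = 0" if "x \<in> {a..b}" for x
      using assms(1)[OF that] by (simp add: sum_subtractf algebra_simps)
  qed
  then show ?thesis
    by simp
qed

lemma zero_count_Dminus_lincomb:
  "zero_count_below n (of_real l) a b (\<lambda>x. \<Sum>k\<le>n. of_real (\<beta> k) * Dminus (of_real l) (p k) x)"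
proof -
  define Q where "Q = (\<lambda>x. \<Sum>k\<le>n. of_real (\<beta> k) * p k x)"
  have Q: "Q \<in> E" "smooth_fun Q" "real_valued Q"
    unfolding Q_def
    by (rule Espace_sum, simp, rule p_in_E, simp, rule smooth_fun_sum, simp, rule p_smooth, simp,
        rule real_valued_sum, rule p_real, simp)
  have "Dminus (of_real l) Q = (\<lambda>x. \<Sum>k\<le>n. of_real (\<beta> k) * Dminus (of_real l) (p k) x)"
    unfolding Q_def by (rule Dminus_sum) (use p_smooth in auto)
  moreover have "zero_count_below n (of_real l) a b (Dminus (of_real l) Q)"
    by (rule zero_count_below_Dminus_chebyshev[OF chebyshev Dminus_Dminus_in_Espace[OF Q(1)]
          smooth_fun_Dminus[OF Q(2)] real_valued_Dminus[OF Q(3,2)] a_less_b n_pos])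
  ultimately show ?thesis
    by simp
qed

lemma exp_eq_linexp: "(\<lambda>x. of_real (exp (l * x))) = linexp 0 1 (of_real l)"
  by (simp add: fun_eq_iff linexp_of_real)

lemma shifted_exp_eq_linexp: "(\<lambda>x. of_real ((x - a) * exp (l * x))) = linexp 1 (- of_real a) (of_real l)"
  by (simp add: fun_eq_iff linexp_of_real)

lemma Dminus_exp: "Dminus (of_real l) (\<lambda>x. of_real (exp (l * x))) x = 0"
  unfolding exp_eq_linexp Dminus_linexp by (simp add: linexp_def)

lemma Dminus_shifted_exp: "Dminus (of_real l) (\<lambda>x. of_real ((x - a) * exp (l * x))) = (\<lambda>x. of_real (exp (l * x)))"
  unfolding exp_eq_linexp shifted_exp_eq_linexp Dminus_linexp by simp

definition c :: "nat \<Rightarrow> real" where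
  "c = (SOME c. \<forall>x. of_real (exp (l * x)) = (\<Sum>k\<le>n. of_real (c k) * p k x))"

definition d :: "nat \<Rightarrow> real" where
  "d = (SOME d. \<forall>x. of_real ((x - a) * exp (l * x)) = (\<Sum>k\<le>n. of_real (d k) * p k x))"

lemma exp_expansion: "of_real (exp (l * x)) = (\<Sum>k\<le>n. of_real (c k) * p k x)"
proof -
  have "\<exists>c. \<forall>x. of_real (exp (l * x)) = (\<Sum>k\<le>n. of_real (c k) * p k x)"
  proof (rule real_coeff_expansion)
    show "(\<lambda>x. of_real (exp (l * x))) \<in> E"
      unfolding exp_eq_linexp by (rule linexp_in_Espace)
  qed (simp add: real_valued_def)
  then show ?thesis
    unfolding c_def by (rule someI_ex[THEN spec])
qed

lemma shifted_exp_expansion: "of_real ((x - a) * exp (l * x)) = (\<Sum>k\<le>n. of_real (d k) * p k x)"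
proof -
  have "\<exists>d. \<forall>x. of_real ((x - a) * exp (l * x)) = (\<Sum>k\<le>n. of_real (d k) * p k x)"
  proof (rule real_coeff_expansion)
    show "(\<lambda>x. of_real ((x - a) * exp (l * x))) \<in> E"
      unfolding shifted_exp_eq_linexp by (rule linexp_in_Espace)
  qed (simp add: real_valued_def)
  then show ?thesis
    unfolding d_def by (rule someI_ex[THEN spec])
qed

sublocale basis: positive_expansion l a b n p c "\<lambda>x. of_real (exp (l * x))"
proof
  show "Dminus_zero_ge (of_real l) (p k) a k" "(Dminus (of_real l) ^^ k) (p k) a \<noteq> 0" if "k \<le> n" for k
    using p_zero_a[OF that] zero_of_order_Dminus[OF p_smooth[OF that]] by auto
  show "Dminus_zero_ge (of_real l) (p k) b (n - k)" if "k \<le> n" for k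
    using p_zero_b[OF that] zero_of_order_Dminus[OF p_smooth[OF that]] by auto
  show "0 < Re (complex_of_real (exp (l * a)))"
    by simp
qed (use a_less_b p_smooth p_real p_nonneg exp_expansion Dminus_exp zero_count_Dminus_lincomb in auto)

lemma c_pos: "k \<le> n \<Longrightarrow> c k > 0"
  by (rule basis.coeff_pos)

lemma d_0: "d 0 = 0"
  using shifted_exp_expansion[of a] lincomb_at_a p_zero_a[of 0] by (simp add: zero_of_order_def)

lemma d_n: "d n = (b - a) * c n"
proof -
  have "of_real (d n) * p n b = of_real ((b - a) * exp (l * b))"
    using shifted_exp_expansion[of b] lincomb_at_b by simp
  also have "\<dots> = of_real ((b - a) * c n) * p n b"
    using exp_expansion[of b] lincomb_at_b by simp
  finally have "of_real (d n) * p n b = of_real ((b - a) * c n) * p n b" .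
  moreover have "p n b \<noteq> 0"
    using p_zero_b[of n] by (simp add: zero_of_order_def)
  ultimately have "(of_real (d n) :: complex) = of_real ((b - a) * c n)"
    by (metis mult_right_cancel)
  then show ?thesis
    by (rule of_real_eq_iff[THEN iffD1])
qed

definition \<tau> :: "nat \<Rightarrow> real" where
  "\<tau> k = d k / c k"

lemma d_eq_tau_c: "k \<le> n \<Longrightarrow> d k = \<tau> k * c k"
  using c_pos[of k] by (simp add: \<tau>_def)

lemma tau_0: "\<tau> 0 = 0"
  by (simp add: \<tau>_def d_0)

lemma tau_n: "\<tau> n = b - a"
  using c_pos[of n] by (simp add: \<tau>_def d_n)

lemma exp_expansion_H:
  "of_real (exp (l * x)) = (\<Sum>j\<le>n - 1. of_real (\<tau> (Suc j) - \<tau> j) * basis.H (Suc j) x)"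
proof -
  have "(\<lambda>x. of_real ((x - a) * exp (l * x))) = (\<lambda>x. \<Sum>k\<le>n. of_real (d k) * p k x)"
    using shifted_exp_expansion by blast
  with Dminus_shifted_exp have "(\<lambda>x. of_real (exp (l * x))) = Dminus (of_real l) (\<lambda>x. \<Sum>k\<le>n. of_real (d k) * p k x)"
    by simp
  also have "\<dots> = (\<lambda>x. \<Sum>k\<le>n. of_real (d k) * Dminus (of_real l) (p k) x)"
    by (rule Dminus_sum) (use p_smooth in auto)
  finally have "of_real (exp (l * x)) = (\<Sum>k\<le>n. of_real (d k) * Dminus (of_real l) (p k) x)"
    by (rule fun_cong)
  also have "\<dots> = (\<Sum>k\<le>n. of_real (\<tau> k) * (basis.H k x - basis.H (Suc k) x))"
    by (rule sum.cong) (simp_all add: basis.H_diff d_eq_tau_c)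
  also have "\<dots> = (\<Sum>j<n. of_real (\<tau> (Suc j) - \<tau> j) * basis.H (Suc j) x)"
    unfolding sum_by_parts[where h="\<lambda>k. basis.H k x"] by (simp add: basis.H_0 basis.H_Suc_N)
  also have "{..<n} = {..n - 1}"
    using n_pos by auto
  finally show ?thesis .
qed

sublocale derived: positive_expansion l a b "n - 1" "\<lambda>j. basis.H (Suc j)" "\<lambda>j. \<tau> (Suc j) - \<tau> j"
  "\<lambda>x. of_real (exp (l * x))"
proof
  fix j assume j: "j \<le> n - 1"
  then have k: "1 \<le> Suc j" "Suc j \<le> n"
    using n_pos by auto
  show "smooth_fun (basis.H (Suc j))" "real_valued (basis.H (Suc j))"
    by (rule basis.H_smooth, rule basis.H_real)
  show "Re (basis.H (Suc j) t) \<ge> 0" if "t \<in> {a<..<b}" for t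
    using basis.H_pos[OF k that] by simp
  show "Dminus_zero_ge (of_real l) (basis.H (Suc j)) a j"
    using basis.H_zero_a[OF k] by simp
  show "(Dminus (of_real l) ^^ j) (basis.H (Suc j)) a \<noteq> 0"
    using basis.H_exact_a[OF k] by simp
  show "Dminus_zero_ge (of_real l) (basis.H (Suc j)) b (n - 1 - j)"
    using basis.H_zero_b[OF k] by simp
next
  fix \<beta> :: "nat \<Rightarrow> real"
  define Q where "Q = (\<lambda>x. \<Sum>j\<le>n - 1. of_real (\<beta> j) * basis.R (Suc j) x)"
  have R_in_E: "basis.R k \<in> E" for k
    unfolding basis.R_def by (rule Espace_sum) (use p_in_E in auto)
  have "Q \<in> E"
    unfolding Q_def by (rule Espace_sum) (use R_in_E in auto)
  have "Dminus (of_real l) Q = (\<lambda>x. \<Sum>j\<le>n - 1. of_real (\<beta> j) * basis.H (Suc j) x)"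
    unfolding Q_def basis.H_def by (rule Dminus_sum) (auto intro: basis.R_smooth)
  then have "Dminus (of_real l) (Dminus (of_real l) Q) =
      (\<lambda>x. \<Sum>j\<le>n - 1. of_real (\<beta> j) * Dminus (of_real l) (basis.H (Suc j)) x)"
    by (simp only:) (rule Dminus_sum, auto intro: basis.H_smooth)
  moreover have "zero_count_below (n - 1) (of_real l) a b (Dminus (of_real l) (Dminus (of_real l) Q))"
    by (rule zero_count_below_chebyshev[OF _ Dminus_Dminus_in_Espace[OF \<open>Q \<in> E\<close>]
          smooth_fun_Dminus[OF smooth_fun_Dminus[OF Espace_smooth[OF \<open>Q \<in> E\<close>]]] a_less_b])
      (use chebyshev n_pos in \<open>simp add: of_nat_diff\<close>)
  ultimately show "zero_count_below (n - 1) (of_real l) a b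
      (\<lambda>x. \<Sum>j\<le>n - 1. of_real (\<beta> j) * Dminus (of_real l) (basis.H (Suc j)) x)"
    by simp
  show "0 < Re (complex_of_real (exp (l * a)))"
    by simp
qed (use a_less_b exp_expansion_H Dminus_exp in auto)

lemma tau_strict_mono: "j < n \<Longrightarrow> \<tau> j < \<tau> (Suc j)"
  using derived.coeff_pos[of j] by simp

lemma tau_mono: "k \<le> m \<Longrightarrow> m \<le> n \<Longrightarrow> \<tau> k \<le> \<tau> m"
proof (induction m)
  case (Suc m)
  then show ?case
    using tau_strict_mono[of m] by (cases "k = Suc m") auto
qed simp

definition node :: "nat \<Rightarrow> real" where
  "node k = a + \<tau> k"

definition weight :: "nat \<Rightarrow> real" where
  "weight k = c k * exp (- l * node k)"

definition reproduces :: "(nat \<Rightarrow> real) \<Rightarrow> (nat \<Rightarrow> real) \<Rightarrow> bool" where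
  "reproduces t \<alpha> \<longleftrightarrow> (\<forall>k\<le>n. t k \<in> {a..b} \<and> \<alpha> k > 0) \<and>
     (\<forall>x\<in>{a..b}. (\<Sum>k\<le>n. of_real (exp (l * t k) * \<alpha> k) * p k x) = of_real (exp (l * x))) \<and>
     (\<forall>x\<in>{a..b}. (\<Sum>k\<le>n. of_real (t k * exp (l * t k) * \<alpha> k) * p k x) = of_real (x * exp (l * x)))"

lemma xexp_expansion: "of_real (x * exp (l * x)) = (\<Sum>k\<le>n. of_real (a * c k + d k) * p k x)"
proof -
  have "of_real (x * exp (l * x)) = of_real a * of_real (exp (l * x)) + of_real ((x - a) * exp (l * x))"
    by (simp add: algebra_simps)
  also have "\<dots> = (\<Sum>k\<le>n. of_real (a * c k + d k) * p k x)"
    unfolding exp_expansion shifted_exp_expansion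
    by (simp add: sum_distrib_left sum.distrib algebra_simps)
  finally show ?thesis .
qed

lemma node_in_interval: "k \<le> n \<Longrightarrow> node k \<in> {a..b}"
  using tau_mono[of 0 k] tau_mono[of k n] tau_0 tau_n by (simp add: node_def)

lemma weight_pos: "k \<le> n \<Longrightarrow> weight k > 0"
  using c_pos by (simp add: weight_def)

lemma exp_node_weight: "exp (l * node k) * weight k = c k"
  by (simp add: weight_def exp_minus field_simps)

lemma reproduces_node_weight: "reproduces node weight"
proof -
  have "node k * exp (l * node k) * weight k = a * c k + d k" if "k \<le> n" for k
    using exp_node_weight[of k] d_eq_tau_c[OF that] by (simp add: node_def algebra_simps)
  then show ?thesis
    unfolding reproduces_def
    using node_in_interval weight_pos exp_expansion xexp_expansion by (simp add: exp_node_weight)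
qed

lemma reproduces_unique:
  assumes "reproduces t \<alpha>" "k \<le> n"
  shows "t k = node k \<and> \<alpha> k = weight k"
proof -
  have c_k: "exp (l * t k) * \<alpha> k = c k"
    by (rule lincomb_coeffs_unique[OF _ assms(2)]) (use assms(1) exp_expansion in \<open>simp add: reproduces_def\<close>)
  have "t k * c k = t k * exp (l * t k) * \<alpha> k"
    by (simp add: c_k[symmetric] mult.assoc)
  also have "\<dots> = a * c k + d k"
    by (rule lincomb_coeffs_unique[OF _ assms(2)]) (use assms(1) xexp_expansion in \<open>simp add: reproduces_def\<close>)
  also have "\<dots> = node k * c k"
    using d_eq_tau_c[OF assms(2)] by (simp add: node_def algebra_simps)
  finally have "t k * c k = node k * c k" .
  then have "t k = node k"
    using c_pos[OF assms(2)] by simp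
  moreover have "\<alpha> k = c k * exp (- l * t k)"
    using c_k by (simp add: exp_minus field_simps)
  ultimately show ?thesis
    by (simp add: weight_def)
qed

end

theorem theorem10:
  fixes lam0 :: real and ls :: "complex list" and n :: nat and a b :: real
    and p :: "nat \<Rightarrow> real \<Rightarrow> complex"
  assumes "n \<ge> 1" and "length ls = n - 1" and "a < b"
    and "ext_chebyshev (Espace ls) (int n - 2) a b"
    and "closed_under_cnj (Espace ls)"
    and "bernstein_basis (Espace (complex_of_real lam0 # complex_of_real lam0 # ls)) n a b p"
    and "\<forall>k\<le>n. \<forall>x. Im (p k x) = 0"
    and "\<forall>k\<le>n. \<forall>x\<in>{a..b}. Re (p k x) \<ge> 0"
  shows "\<exists>t \<alpha> :: nat \<Rightarrow> real.
     ((\<forall>k\<le>n. t k \<in> {a..b} \<and> \<alpha> k > 0) \<and>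
      (\<forall>x\<in>{a..b}. (\<Sum>k\<le>n. complex_of_real (exp (lam0 * t k) * \<alpha> k) * p k x)
                    = complex_of_real (exp (lam0 * x))) \<and>
      (\<forall>x\<in>{a..b}. (\<Sum>k\<le>n. complex_of_real (t k * exp (lam0 * t k) * \<alpha> k) * p k x)
                    = complex_of_real (x * exp (lam0 * x)))) \<and>
     (\<forall>t' \<alpha>' :: nat \<Rightarrow> real.
        ((\<forall>k\<le>n. t' k \<in> {a..b} \<and> \<alpha>' k > 0) \<and>
         (\<forall>x\<in>{a..b}. (\<Sum>k\<le>n. complex_of_real (exp (lam0 * t' k) * \<alpha>' k) * p k x)
                       = complex_of_real (exp (lam0 * x))) \<and>
         (\<forall>x\<in>{a..b}. (\<Sum>k\<le>n. complex_of_real (t' k * exp (lam0 * t' k) * \<alpha>' k) * p k x)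
                       = complex_of_real (x * exp (lam0 * x))))
        \<longrightarrow> (\<forall>k\<le>n. t' k = t k \<and> \<alpha>' k = \<alpha> k))"
proof -
  interpret bernstein_setting lam0 ls n a b p
    by unfold_locales (use assms in auto)
  have "reproduces node weight \<and> (\<forall>t' \<alpha>'. reproduces t' \<alpha>' \<longrightarrow> (\<forall>k\<le>n. t' k = node k \<and> \<alpha>' k = weight k))"
    using reproduces_node_weight reproduces_unique by blast
  then show ?thesis
    unfolding reproduces_def by blast
qed

end
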